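(* Let $G\in\Gamma_0(\mathbb{R}^n)$ be partly smooth at $x^\star$ relative to an affine or linear manifold $\mathcal{M}_G$ (so $\mathcal{M}_G = x^\star + T$ with $T\eqdef T^G_{x^\star}$), and let $\widetilde{G}$ be a $C^2$ smooth representative of $G$ on $\mathcal{M}_G$ near $x^\star$. For $h\in\mathbb{R}^n$ let $x^\star_h \eqdef x^\star + P_{T} h$. Then, as $h\to 0$, \[ e_G^{x^\star_h} = e_G^{x^\star} + P_{T}\nabla^2\widetilde{G}(x^\star) P_{T} h + o(h), \] and moreover, for every $h\in\mathbb{R}^n$, \[ \big\langle P_{T}\nabla^2\widetilde{G}(x^\star)P_{T} h,\, h\big\rangle \geq 0 . \]
   Context: $\Gamma_0(\mathbb{R}^n)$: proper lsc convex functions. For $x$ with $\partial G(x)\neq\emptyset$, $T^G_x\eqdef \mathrm{Lin}(\partial G(x))^\perp$ ($\mathrm{Lin}(C)$ the subspace parallel to the affine hull of $C$) and $e_G^x \eqdef P_{T^G_x}(\partial G(x))$ (a singleton). $G$ is partly smooth at $x$ relative to $\mathcal{M}\ni x$ if $\mathcal{M}$ is a $C^2$-manifold around $x$ with $G|_{\mathcal{M}}$ $C^2$ near $x$, the tangent space of $\mathcal{M}$ at $x$ is $T^G_x$, and $\partial G$ is continuous at $x$ relative to $\mathcal{M}$. A $C^2$ smooth representative $\widetilde G$ is a $C^2$ function on a neighbourhood of $x^\star$ agreeing with $G$ on $\mathcal{M}_G$; $\nabla^2\widetilde G$ is its Euclidean Hessian. $P_T$ is the orthogonal projector onto $T$.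 *)

theory Defs
  imports "HOL-Analysis.Analysis" "HOL-Library.Extended_Real"
begin

definition epigraph_e :: "('a::euclidean_space \<Rightarrow> ereal) \<Rightarrow> ('a \<times> real) set" where
  "epigraph_e G = {(x, r). G x \<le> ereal r}"

definition Gamma0 :: "('a::euclidean_space \<Rightarrow> ereal) \<Rightarrow> bool" where
  "Gamma0 G \<longleftrightarrow> (\<forall>x. G x \<noteq> -\<infinity>) \<and> (\<exists>x. G x \<noteq> \<infinity>)
      \<and> convex (epigraph_e G) \<and> closed (epigraph_e G)"

text \<open>Convex subdifferential (empty outside the domain).\<close>
definition subdiff :: "('a::euclidean_space \<Rightarrow> ereal) \<Rightarrow> 'a \<Rightarrow> 'a set" where
  "subdiff G x = {v. \<bar>G x\<bar> \<noteq> \<infinity> \<and> (\<forall>y. G x + ereal (v \<bullet> (y - x)) \<le> G y)}"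

text \<open>Lin(C): the subspace parallel to the affine hull of C.\<close>
definition Lin :: "'a::euclidean_space set \<Rightarrow> 'a set" where
  "Lin C = span {a - b | a b. a \<in> C \<and> b \<in> C}"

definition Tmodel :: "('a::euclidean_space \<Rightarrow> ereal) \<Rightarrow> 'a \<Rightarrow> 'a set" where
  "Tmodel G x = orthogonal_comp (Lin (subdiff G x))"

definition proj :: "'a::euclidean_space set \<Rightarrow> 'a \<Rightarrow> 'a" where
  "proj T v = closest_point T v"

definition eG :: "('a::euclidean_space \<Rightarrow> ereal) \<Rightarrow> 'a \<Rightarrow> 'a" where
  "eG G x = (THE e. proj (Tmodel G x) ` subdiff G x = {e})"

definition C2_on :: "'a::euclidean_space set \<Rightarrow> ('a \<Rightarrow> real) \<Rightarrow> ('a \<Rightarrow> 'a)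
                      \<Rightarrow> ('a \<Rightarrow> ('a \<Rightarrow>\<^sub>L 'a)) \<Rightarrow> bool" where
  "C2_on U f g H \<longleftrightarrow> open U
     \<and> (\<forall>y\<in>U. (f has_derivative (\<lambda>v. g y \<bullet> v)) (at y))
     \<and> (\<forall>y\<in>U. (g has_derivative blinfun_apply (H y)) (at y))
     \<and> continuous_on U H"

definition smooth_rep :: "('a::euclidean_space \<Rightarrow> ereal) \<Rightarrow> 'a set \<Rightarrow> 'a \<Rightarrow> 'a set
      \<Rightarrow> ('a \<Rightarrow> real) \<Rightarrow> ('a \<Rightarrow> 'a) \<Rightarrow> ('a \<Rightarrow> ('a \<Rightarrow>\<^sub>L 'a)) \<Rightarrow> bool" where
  "smooth_rep G M x U f g H \<longleftrightarrow> x \<in> U \<and> C2_on U f g H \<and> (\<forall>y\<in>M \<inter> U. G y = ereal (f y))"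

text \<open>Continuity of \<partial>G at x relative to M (Painleve-Kuratowski):
  outer limit \<subseteq> \<partial>G(x) \<subseteq> inner limit.\<close>
definition subdiff_cont_rel :: "('a::euclidean_space \<Rightarrow> ereal) \<Rightarrow> 'a \<Rightarrow> 'a set \<Rightarrow> bool" where
  "subdiff_cont_rel G x M \<longleftrightarrow>
     (\<forall>v\<in>subdiff G x. \<forall>\<epsilon>>0. \<exists>\<delta>>0. \<forall>y\<in>M. dist y x < \<delta> \<longrightarrow> (\<exists>w\<in>subdiff G y. dist w v < \<epsilon>))
   \<and> (\<forall>v. (\<forall>\<epsilon>>0. \<forall>\<delta>>0. \<exists>y\<in>M. dist y x < \<delta> \<and> (\<exists>w\<in>subdiff G y. dist w v < \<epsilon>))
            \<longrightarrow> v \<in> subdiff G x)"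

text \<open>Partial smoothness at x relative to an affine manifold M.  An affine set
  is a C^2 manifold whose tangent space at x is the parallel subspace {y - x | y \<in> M}.\<close>
definition partly_smooth_affine :: "('a::euclidean_space \<Rightarrow> ereal) \<Rightarrow> 'a \<Rightarrow> 'a set \<Rightarrow> bool" where
  "partly_smooth_affine G x M \<longleftrightarrow>
     subdiff G x \<noteq> {} \<and> affine M \<and> x \<in> M
   \<and> (\<exists>U f g H. smooth_rep G M x U f g H)
   \<and> (\<lambda>y. y - x) ` M = Tmodel G x
   \<and> subdiff_cont_rel G x M"

end

theory Submission
  imports Defs
begin

text \<open>On the affine manifold M = xs + T the function G coincides with the smooth Gt, so a
  subgradient at a point y of M near xs differs from the gradient of Gt at y by a vector
  orthogonal to T.  Inner semicontinuity of the subdifferential along M forces Lin (subdiff G y)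
  to contain, hence to equal, Lin (subdiff G xs) near xs; so the model tangent space at y is T
  and eG G y is the projection onto T of the gradient at y.  The expansion is then the
  differentiability of the gradient at xs.  For the sign, monotonicity of the subdifferential
  makes s \<mapsto> gradient (xs + s t) \<bullet> t nondecreasing for small s > 0 whenever t \<in> T, so its
  derivative, the Hessian quadratic form at t, is nonnegative.\<close>

section \<open>Orthogonal projection onto a subspace\<close>

lemma proj_subspace_eqI:
  fixes S :: "'a::euclidean_space set"
  assumes S: "subspace S" and "p \<in> S" and orth: "\<And>t. t \<in> S \<Longrightarrow> (v - p) \<bullet> t = 0"
  shows "proj S v = p"
proof -
  have "dist v p \<le> dist v z" if z: "z \<in> S" for z
  proof -
    have "(v - p) \<bullet> (p - z) = 0"
      using orth S \<open>p \<in> S\<close> z by (simp add: subspace_diff)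
    then have "(norm (v - z))\<^sup>2 = (norm (v - p))\<^sup>2 + (norm (p - z))\<^sup>2"
      using norm_add_Pythagorean[of "v - p" "p - z"] by (simp add: orthogonal_def)
    then show ?thesis
      by (simp add: dist_norm power2_le_imp_le)
  qed
  then show ?thesis
    unfolding proj_def using S \<open>p \<in> S\<close>
    by (intro closest_point_unique[symmetric]) (simp_all add: subspace_imp_convex closed_subspace)
qed

lemma proj_subspace:
  fixes S :: "'a::euclidean_space set"
  assumes "subspace S"
  shows "proj S v \<in> S" and "t \<in> S \<Longrightarrow> (v - proj S v) \<bullet> t = 0"
proof -
  have "v \<in> S + S\<^sup>\<bottom>"
    using subspace_sum_orthogonal_comp[OF assms] by simp
  then obtain p q where "v = p + q" "p \<in> S" "q \<in> S\<^sup>\<bottom>"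
    by (rule set_plus_elim)
  moreover from \<open>q \<in> S\<^sup>\<bottom>\<close> have "\<And>t. t \<in> S \<Longrightarrow> q \<bullet> t = 0"
    by (auto simp: orthogonal_comp_def orthogonal_def inner_commute)
  ultimately have "proj S v = p"
    by (intro proj_subspace_eqI[OF assms]) auto
  with \<open>p \<in> S\<close> \<open>v = p + q\<close> \<open>\<And>t. t \<in> S \<Longrightarrow> q \<bullet> t = 0\<close>
  show "proj S v \<in> S" and "t \<in> S \<Longrightarrow> (v - proj S v) \<bullet> t = 0"
    by auto
qed

lemma proj_diff:
  fixes S :: "'a::euclidean_space set"
  assumes "subspace S"
  shows "proj S (u - v) = proj S u - proj S v"
proof (rule proj_subspace_eqI[OF assms])
  show "proj S u - proj S v \<in> S"
    using proj_subspace(1)[OF assms] assms by (simp add: subspace_diff)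
  fix t assume "t \<in> S"
  have "u - v - (proj S u - proj S v) = (u - proj S u) - (v - proj S v)"
    by simp
  then show "(u - v - (proj S u - proj S v)) \<bullet> t = 0"
    using proj_subspace(2)[OF assms \<open>t \<in> S\<close>] by (simp only: inner_diff_left)
qed

lemma norm_proj_le:
  fixes S :: "'a::euclidean_space set"
  assumes "subspace S"
  shows "norm (proj S v) \<le> norm v"
proof -
  have "proj S v \<bullet> (v - proj S v) = 0"
    using proj_subspace[OF assms] by (simp add: inner_commute)
  then have "(norm v)\<^sup>2 = (norm (proj S v))\<^sup>2 + (norm (v - proj S v))\<^sup>2"
    using norm_add_Pythagorean[of "proj S v" "v - proj S v"] by (simp add: orthogonal_def)
  then show ?thesis
    by (simp add: power2_le_imp_le)
qed

lemma inner_proj_commute: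
  fixes S :: "'a::euclidean_space set"
  assumes "subspace S"
  shows "proj S u \<bullet> v = u \<bullet> proj S v"
proof -
  have "proj S u \<bullet> v = proj S u \<bullet> proj S v"
    using proj_subspace(2)[OF assms proj_subspace(1)[OF assms, of u], of v]
    by (simp add: inner_commute inner_diff_left inner_diff_right)
  also have "\<dots> = u \<bullet> proj S v"
    using proj_subspace(2)[OF assms proj_subspace(1)[OF assms, of v], of u] by (simp add: inner_diff_left)
  finally show ?thesis .
qed


section \<open>Parallel subspaces\<close>

lemma subspace_Lin: "subspace (Lin C)"
  by (simp add: Lin_def subspace_span)

lemma diff_in_Lin: "a \<in> C \<Longrightarrow> b \<in> C \<Longrightarrow> a - b \<in> Lin C"
  unfolding Lin_def by (intro span_base) blast

lemma Lin_subset: "subspace S \<Longrightarrow> (\<And>a b. a \<in> C \<Longrightarrow> b \<in> C \<Longrightarrow> a - b \<in> S) \<Longrightarrow> Lin C \<subseteq> S"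
  unfolding Lin_def by (rule span_minimal) auto

lemma subspace_eq_if_orthogonal_comp_trivial:
  fixes A B :: "'a::euclidean_space set"
  assumes "subspace A" "subspace B" "B \<subseteq> A" and trivial: "\<And>w. w \<in> A \<Longrightarrow> w \<in> B\<^sup>\<bottom> \<Longrightarrow> w = 0"
  shows "A = B"
proof
  show "A \<subseteq> B"
  proof
    fix w assume "w \<in> A"
    have "proj B w \<in> B"
      using proj_subspace(1)[OF \<open>subspace B\<close>] .
    then have "w - proj B w \<in> A"
      using \<open>w \<in> A\<close> assms(1,3) by (auto intro: subspace_diff)
    moreover have "w - proj B w \<in> B\<^sup>\<bottom>"
      using proj_subspace(2)[OF \<open>subspace B\<close>]
      by (auto simp: orthogonal_comp_def orthogonal_def inner_commute)
    ultimately show "w \<in> B"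
      using trivial \<open>proj B w \<in> B\<close> by force
  qed
qed (fact \<open>B \<subseteq> A\<close>)

lemma span_unit_inner_sum_lower_bound:
  fixes B :: "'a::euclidean_space set"
  assumes "finite B"
  shows "\<exists>m>0. \<forall>u\<in>span B. norm u = 1 \<longrightarrow> m \<le> (\<Sum>d\<in>B. \<bar>u \<bullet> d\<bar>)"
proof (cases "span B \<inter> sphere 0 1 = {}")
  case True
  then show ?thesis
    by (intro exI[of _ 1]) auto
next
  case False
  let ?q = "\<lambda>u. \<Sum>d\<in>B. \<bar>u \<bullet> d\<bar>"
  have "compact (span B \<inter> sphere 0 1)"
    by (intro closed_Int_compact closed_subspace subspace_span compact_sphere)
  moreover have "continuous_on (span B \<inter> sphere 0 1) ?q"
    by (intro continuous_intros)
  ultimately obtain u0 where u0: "u0 \<in> span B \<inter> sphere 0 1"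
    and min: "\<And>u. u \<in> span B \<inter> sphere 0 1 \<Longrightarrow> ?q u0 \<le> ?q u"
    using continuous_attains_inf[OF _ False] by blast
  have "?q u0 > 0"
  proof (rule ccontr)
    assume "\<not> ?q u0 > 0"
    then have "?q u0 = 0"
      by (smt (verit) abs_ge_zero sum_nonneg)
    then have "\<forall>d\<in>B. orthogonal u0 d"
      using \<open>finite B\<close> by (simp add: orthogonal_def sum_nonneg_eq_0_iff)
    then have "orthogonal u0 u0"
      using u0 orthogonal_to_span by blast
    then show False
      using u0 by (simp add: orthogonal_def)
  qed
  with min show ?thesis
    by (intro exI[of _ "?q u0"]) auto
qed

lemma eventually_approx_difference:
  fixes S0 :: "'a::real_normed_vector set" and Sf :: "'b \<Rightarrow> 'a set"
  assumes inner: "\<And>v e. v \<in> S0 \<Longrightarrow> e > 0 \<Longrightarrow> eventually (\<lambda>y. \<exists>w\<in>Sf y. dist w v < e) F"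
    and "a \<in> S0" "b \<in> S0" "e > 0"
  shows "eventually (\<lambda>y. \<exists>a'\<in>Sf y. \<exists>b'\<in>Sf y. norm ((a - b) - (a' - b')) < e) F"
proof -
  have "eventually (\<lambda>y. (\<exists>a'\<in>Sf y. dist a' a < e/2) \<and> (\<exists>b'\<in>Sf y. dist b' b < e/2)) F"
    using assms by (intro eventually_conj inner) auto
  then show ?thesis
  proof (rule eventually_mono, elim conjE bexE)
    fix y a' b' assume "a' \<in> Sf y" "b' \<in> Sf y" "dist a' a < e/2" "dist b' b < e/2"
    moreover have "(a - b) - (a' - b') = (a - a') - (b - b')"
      by simp
    then have "norm ((a - b) - (a' - b')) \<le> norm (a - a') + norm (b - b')"
      by (metis norm_triangle_ineq4)
    ultimately show "\<exists>a'\<in>Sf y. \<exists>b'\<in>Sf y. norm ((a - b) - (a' - b')) < e"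
      by (metis dist_norm dist_commute field_sum_of_halves add_strict_mono order.strict_trans1)
  qed
qed

text \<open>A basis of Lin S0 made of differences in S0 is approximated by differences in Sf y,
  and by compactness a unit vector of Lin S0 cannot be almost orthogonal to all basis vectors.\<close>

lemma Lin_lower_semicontinuous:
  fixes S0 :: "'a::euclidean_space set" and Sf :: "'b \<Rightarrow> 'a set"
  assumes inner: "\<And>v e. v \<in> S0 \<Longrightarrow> e > 0 \<Longrightarrow> eventually (\<lambda>y. \<exists>w\<in>Sf y. dist w v < e) F"
  shows "eventually (\<lambda>y. \<forall>w\<in>Lin S0. w \<in> (Lin (Sf y))\<^sup>\<bottom> \<longrightarrow> w = 0) F"
proof -
  obtain B where B: "B \<subseteq> {a - b | a b. a \<in> S0 \<and> b \<in> S0}" "independent B"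
      "{a - b | a b. a \<in> S0 \<and> b \<in> S0} \<subseteq> span B"
    using maximal_independent_subset by blast
  have "finite B"
    using B(2) independent_imp_finite by blast
  have LB: "Lin S0 = span B"
    unfolding Lin_def using B span_mono[OF B(1)] span_minimal[OF B(3) subspace_span] by blast
  obtain m where "m > 0" and m: "\<And>u. u \<in> span B \<Longrightarrow> norm u = 1 \<Longrightarrow> m \<le> (\<Sum>d\<in>B. \<bar>u \<bullet> d\<bar>)"
    using span_unit_inner_sum_lower_bound[OF \<open>finite B\<close>] by blast
  define e where "e = m / (card B + 1)"
  have "e > 0"
    using \<open>m > 0\<close> by (simp add: e_def)
  have "card B * e < m"
    using \<open>m > 0\<close> by (simp add: e_def field_simps)
  have approx: "eventually (\<lambda>y. \<exists>a'\<in>Sf y. \<exists>b'\<in>Sf y. norm (d - (a' - b')) < e) F"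
    if "d \<in> B" for d
    using that B(1) eventually_approx_difference[OF inner _ _ \<open>e > 0\<close>] by blast
  have "eventually (\<lambda>y. \<forall>d\<in>B. \<exists>a'\<in>Sf y. \<exists>b'\<in>Sf y. norm (d - (a' - b')) < e) F"
    using approx by (intro eventually_ball_finite[OF \<open>finite B\<close>]) blast
  then show ?thesis
  proof (rule eventually_mono)
    fix y
    assume near: "\<forall>d\<in>B. \<exists>a'\<in>Sf y. \<exists>b'\<in>Sf y. norm (d - (a' - b')) < e"
    show "\<forall>w\<in>Lin S0. w \<in> (Lin (Sf y))\<^sup>\<bottom> \<longrightarrow> w = 0"
    proof (intro ballI impI, rule ccontr)
      fix w assume w: "w \<in> Lin S0" "w \<in> (Lin (Sf y))\<^sup>\<bottom>" "w \<noteq> 0"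
      define u where "u = w /\<^sub>R norm w"
      have u: "u \<in> span B" "norm u = 1" "u \<in> (Lin (Sf y))\<^sup>\<bottom>"
        using w LB by (auto simp: u_def span_scale orthogonal_comp_def orthogonal_def)
      have "\<bar>u \<bullet> d\<bar> \<le> e" if "d \<in> B" for d
      proof -
        obtain a' b' where "a' \<in> Sf y" "b' \<in> Sf y" "norm (d - (a' - b')) < e"
          using near \<open>d \<in> B\<close> by blast
        then have "u \<bullet> d = u \<bullet> (d - (a' - b'))"
          using u(3) diff_in_Lin[of a' "Sf y" b']
          by (auto simp: orthogonal_comp_def orthogonal_def inner_diff_right inner_commute)
        also have "\<bar>\<dots>\<bar> \<le> norm u * norm (d - (a' - b'))"
          by (rule Cauchy_Schwarz_ineq2)
        finally show ?thesis
          using u(2) \<open>norm (d - (a' - b')) < e\<close> by simp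
      qed
      then have "(\<Sum>d\<in>B. \<bar>u \<bullet> d\<bar>) \<le> card B * e"
        by (rule sum_bounded_above)
      with m[OF u(1,2)] \<open>card B * e < m\<close> show False
        by simp
    qed
  qed
qed


section \<open>Derivatives along lines\<close>

lemma has_real_derivative_along_line:
  fixes f :: "'a::real_normed_vector \<Rightarrow> real"
  assumes "(f has_derivative f') (at x)"
  shows "((\<lambda>s. f (x + s *\<^sub>R t)) has_real_derivative f' t) (at 0)"
proof -
  interpret f': bounded_linear f'
    using assms by (rule has_derivative_bounded_linear)
  have "((\<lambda>s. x + s *\<^sub>R t) has_derivative (\<lambda>s. s *\<^sub>R t)) (at 0)"
    by (intro derivative_eq_intros) auto
  then have "((\<lambda>s. f (x + s *\<^sub>R t)) has_derivative (\<lambda>s. f' (s *\<^sub>R t))) (at 0)"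
    by (rule has_derivative_compose) (simp add: assms)
  then show ?thesis
    unfolding has_field_derivative_def by (simp add: f'.scaleR mult_commute_abs)
qed

lemma DERIV_eq_supporting_slope:
  fixes \<phi> :: "real \<Rightarrow> real"
  assumes "DERIV \<phi> 0 :> D" and "eventually (\<lambda>s. \<phi> 0 + s * c \<le> \<phi> s) (nhds 0)"
  shows "D = c"
proof -
  have der: "DERIV (\<lambda>s. \<phi> s - s * c) 0 :> D - c"
    using assms(1) by (auto intro!: derivative_eq_intros)
  obtain d where "d > 0" "\<forall>s. dist s 0 < d \<longrightarrow> \<phi> 0 + s * c \<le> \<phi> s"
    using assms(2) unfolding eventually_nhds_metric by blast
  then have "\<forall>s. \<bar>0 - s\<bar> < d \<longrightarrow> \<phi> 0 - 0 * c \<le> \<phi> s - s * c"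
    by (auto simp: dist_real_def)
  then have "D - c = 0"
    by (rule DERIV_local_min[OF der \<open>d > 0\<close>])
  then show ?thesis
    by simp
qed

lemma DERIV_nonneg_if_right_nondecreasing:
  fixes \<phi> :: "real \<Rightarrow> real"
  assumes "DERIV \<phi> 0 :> D" and "eventually (\<lambda>s. \<phi> 0 \<le> \<phi> s) (at_right 0)"
  shows "0 \<le> D"
proof (rule ccontr)
  assume "\<not> 0 \<le> D"
  then obtain d where "d > 0" and dec: "\<And>h. 0 < h \<Longrightarrow> h < d \<Longrightarrow> \<phi> (0 + h) < \<phi> 0"
    using DERIV_neg_dec_right[OF assms(1)] by auto
  obtain b where "b > 0" and inc: "\<And>h. 0 < h \<Longrightarrow> h < b \<Longrightarrow> \<phi> 0 \<le> \<phi> h"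
    using assms(2) unfolding eventually_at_right_field by auto
  have "\<phi> (min d b / 2) < \<phi> 0" "\<phi> 0 \<le> \<phi> (min d b / 2)"
    using dec[of "min d b / 2"] inc[of "min d b / 2"] \<open>d > 0\<close> \<open>b > 0\<close> by auto
  then show False
    by simp
qed

section \<open>Subdifferentials\<close>

lemma subdiff_monotone:
  assumes "v \<in> subdiff G x" and "w \<in> subdiff G y"
  shows "0 \<le> (w - v) \<bullet> (y - x)"
proof -
  from assms obtain a b where "G x = ereal a" "G y = ereal b"
    by (auto simp: subdiff_def abs_neq_infinity_cases)
  moreover have "G x + ereal (v \<bullet> (y - x)) \<le> G y" "G y + ereal (w \<bullet> (x - y)) \<le> G x"
    using assms by (auto simp: subdiff_def)
  ultimately have "a + v \<bullet> (y - x) \<le> b" "b + w \<bullet> (x - y) \<le> a"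
    by auto
  then show ?thesis
    by (simp add: inner_diff_left inner_diff_right)
qed

lemma subdiff_cont_rel_inner:
  assumes "subdiff_cont_rel G x M" and "v \<in> subdiff G x" and "e > 0"
  shows "eventually (\<lambda>y. \<exists>w\<in>subdiff G y. dist w v < e) (inf (nhds x) (principal M))"
proof -
  obtain d where "d > 0" "\<forall>y\<in>M. dist y x < d \<longrightarrow> (\<exists>w\<in>subdiff G y. dist w v < e)"
    using assms unfolding subdiff_cont_rel_def by blast
  then show ?thesis
    unfolding eventually_inf_principal eventually_nhds_metric by blast
qed

lemma eG_eqI:
  assumes "subdiff G y \<noteq> {}" and "\<And>v. v \<in> subdiff G y \<Longrightarrow> proj (Tmodel G y) v = e"
  shows "eG G y = e"
proof -
  have "proj (Tmodel G y) ` subdiff G y = {e}"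
    using assms by auto
  then show ?thesis
    unfolding eG_def by auto
qed


section \<open>Partly smooth functions on affine manifolds\<close>

locale partly_smooth_representative =
  fixes G :: "'a::euclidean_space \<Rightarrow> ereal" and xs :: 'a and M U :: "'a set"
    and f :: "'a \<Rightarrow> real" and g :: "'a \<Rightarrow> 'a" and H :: "'a \<Rightarrow> ('a \<Rightarrow>\<^sub>L 'a)" and T :: "'a set"
  assumes partly_smooth: "partly_smooth_affine G xs M"
    and smooth: "smooth_rep G M xs U f g H"
    and T_eq: "T = Tmodel G xs"
begin

lemma xs_in_M: "xs \<in> M"
  and subdiff_xs_nonempty: "subdiff G xs \<noteq> {}"
  and subdiff_continuous: "subdiff_cont_rel G xs M"
  and xs_in_U: "xs \<in> U"
  and open_U: "open U"
  and f_derivative: "y \<in> U \<Longrightarrow> (f has_derivative (\<lambda>v. g y \<bullet> v)) (at y)"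
  and g_derivative: "y \<in> U \<Longrightarrow> (g has_derivative blinfun_apply (H y)) (at y)"
  and G_eq_f: "y \<in> M \<Longrightarrow> y \<in> U \<Longrightarrow> G y = ereal (f y)"
  using partly_smooth smooth by (auto simp: partly_smooth_affine_def smooth_rep_def C2_on_def)

lemma subspace_T: "subspace T"
  by (simp add: T_eq Tmodel_def subspace_orthogonal_comp)

lemma orthogonal_comp_T: "T\<^sup>\<bottom> = Lin (subdiff G xs)"
  by (simp add: T_eq Tmodel_def orthogonal_comp_self subspace_Lin)

lemma mem_M_iff: "y \<in> M \<longleftrightarrow> y - xs \<in> T"
proof
  have image: "(\<lambda>y. y - xs) ` M = T"
    using partly_smooth by (simp add: partly_smooth_affine_def T_eq)
  show "y \<in> M \<Longrightarrow> y - xs \<in> T"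
    using image by blast
  assume "y - xs \<in> T"
  then obtain z where "z \<in> M" "z - xs = y - xs"
    using image by (metis imageE)
  then show "y \<in> M"
    by simp
qed

lemma line_in_M: "y \<in> M \<Longrightarrow> t \<in> T \<Longrightarrow> y + s *\<^sub>R t \<in> M"
proof -
  assume "y \<in> M" "t \<in> T"
  then have "(y - xs) + s *\<^sub>R t \<in> T"
    using mem_M_iff subspace_T by (simp add: subspace_add subspace_scale)
  then show "y + s *\<^sub>R t \<in> M"
    using mem_M_iff by (simp add: algebra_simps)
qed

text \<open>Along M the function G is the smooth f, so a subgradient supports f on lines in T.\<close>

lemma subdiff_minus_grad_orthogonal:
  assumes "y \<in> M" "y \<in> U" "v \<in> subdiff G y" "t \<in> T"
  shows "(v - g y) \<bullet> t = 0"
proof -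
  have "((\<lambda>s. y + s *\<^sub>R t) \<longlongrightarrow> y) (nhds 0)"
    unfolding tendsto_nhds_iff by (auto intro!: tendsto_eq_intros)
  then have "eventually (\<lambda>s. y + s *\<^sub>R t \<in> U) (nhds 0)"
    using open_U \<open>y \<in> U\<close> by (rule topological_tendstoD)
  then have "eventually (\<lambda>s. f y + s * (v \<bullet> t) \<le> f (y + s *\<^sub>R t)) (nhds 0)"
  proof (rule eventually_mono)
    fix s assume "y + s *\<^sub>R t \<in> U"
    moreover have "G y + ereal (v \<bullet> ((y + s *\<^sub>R t) - y)) \<le> G (y + s *\<^sub>R t)"
      using \<open>v \<in> subdiff G y\<close> unfolding subdiff_def by blast
    ultimately show "f y + s * (v \<bullet> t) \<le> f (y + s *\<^sub>R t)"
      using G_eq_f assms line_in_M by auto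
  qed
  then have "g y \<bullet> t = v \<bullet> t"
    using DERIV_eq_supporting_slope[OF has_real_derivative_along_line[OF f_derivative[OF \<open>y \<in> U\<close>]]]
    by simp
  then show ?thesis
    by (simp add: inner_diff_left)
qed

lemma eventually_Lin_subdiff_eq:
  "eventually (\<lambda>y. y \<in> M \<and> y \<in> U \<and> subdiff G y \<noteq> {} \<and> Lin (subdiff G y) = Lin (subdiff G xs))
     (inf (nhds xs) (principal M))"
proof -
  obtain v0 where "v0 \<in> subdiff G xs"
    using subdiff_xs_nonempty by blast
  have "eventually (\<lambda>y. y \<in> M \<and> y \<in> U \<and> subdiff G y \<noteq> {} \<and>
      (\<forall>w\<in>Lin (subdiff G xs). w \<in> (Lin (subdiff G y))\<^sup>\<bottom> \<longrightarrow> w = 0)) (inf (nhds xs) (principal M))"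
  proof (intro eventually_conj)
    show "eventually (\<lambda>y. y \<in> M) (inf (nhds xs) (principal M))"
      by (simp add: eventually_inf_principal)
    show "eventually (\<lambda>y. y \<in> U) (inf (nhds xs) (principal M))"
      using eventually_nhds_in_open[OF open_U xs_in_U]
      by (auto simp: eventually_inf_principal elim: eventually_mono)
    show "eventually (\<lambda>y. subdiff G y \<noteq> {}) (inf (nhds xs) (principal M))"
      using subdiff_cont_rel_inner[OF subdiff_continuous \<open>v0 \<in> subdiff G xs\<close> zero_less_one]
      by (rule eventually_mono) blast
    show "eventually (\<lambda>y. \<forall>w\<in>Lin (subdiff G xs). w \<in> (Lin (subdiff G y))\<^sup>\<bottom> \<longrightarrow> w = 0)
        (inf (nhds xs) (principal M))"
      using subdiff_cont_rel_inner[OF subdiff_continuous] by (rule Lin_lower_semicontinuous)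
  qed
  then show ?thesis
  proof (rule eventually_mono, elim conjE, intro conjI)
    fix y assume y: "y \<in> M" "y \<in> U"
      and trivial: "\<forall>w\<in>Lin (subdiff G xs). w \<in> (Lin (subdiff G y))\<^sup>\<bottom> \<longrightarrow> w = 0"
    have "a - b \<in> T\<^sup>\<bottom>" if "a \<in> subdiff G y" "b \<in> subdiff G y" for a b
    proof -
      have "(a - b) \<bullet> t = (a - g y) \<bullet> t - (b - g y) \<bullet> t" for t
        by (simp add: inner_diff_left)
      then show ?thesis
        using subdiff_minus_grad_orthogonal[OF y that(1)] subdiff_minus_grad_orthogonal[OF y that(2)]
        by (auto simp: orthogonal_comp_def orthogonal_def inner_commute)
    qed
    then have "Lin (subdiff G y) \<subseteq> Lin (subdiff G xs)"
      unfolding orthogonal_comp_T[symmetric] by (intro Lin_subset subspace_orthogonal_comp)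
    then show "Lin (subdiff G y) = Lin (subdiff G xs)"
      using trivial by (intro subspace_eq_if_orthogonal_comp_trivial[symmetric] subspace_Lin) auto
  qed
qed

lemma eG_eq_proj_grad:
  assumes "y \<in> M" "y \<in> U" "subdiff G y \<noteq> {}" "Lin (subdiff G y) = Lin (subdiff G xs)"
  shows "eG G y = proj T (g y)"
proof (rule eG_eqI[OF \<open>subdiff G y \<noteq> {}\<close>])
  fix v assume "v \<in> subdiff G y"
  have "Tmodel G y = T"
    using assms(4) by (simp add: T_eq Tmodel_def)
  moreover have "proj T (v - g y) = 0"
    using subdiff_minus_grad_orthogonal[OF assms(1,2) \<open>v \<in> subdiff G y\<close>]
    by (intro proj_subspace_eqI subspace_T subspace_0) auto
  ultimately show "proj (Tmodel G y) v = proj T (g y)"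
    using proj_diff[OF subspace_T] by simp
qed

lemma eventually_eG_eq_proj_grad:
  obtains \<delta> where "\<delta> > 0"
    and "\<And>y. y \<in> M \<Longrightarrow> dist y xs < \<delta> \<Longrightarrow> y \<in> U \<and> subdiff G y \<noteq> {} \<and> eG G y = proj T (g y)"
proof -
  have "eventually (\<lambda>y. y \<in> U \<and> subdiff G y \<noteq> {} \<and> eG G y = proj T (g y))
      (inf (nhds xs) (principal M))"
    using eventually_Lin_subdiff_eq by (rule eventually_mono) (use eG_eq_proj_grad in blast)
  then show ?thesis
    using that unfolding eventually_inf_principal eventually_nhds_metric by blast
qed


lemma eG_first_order_expansion:
  assumes "\<epsilon> > 0"
  shows "\<forall>\<^sub>F h in at 0. norm (eG G (xs + proj T h) - eG G xs - proj T (H xs (proj T h))) \<le> \<epsilon> * norm h"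
proof -
  obtain \<delta> where "\<delta> > 0"
    and \<delta>: "\<And>y. y \<in> M \<Longrightarrow> dist y xs < \<delta> \<Longrightarrow> y \<in> U \<and> subdiff G y \<noteq> {} \<and> eG G y = proj T (g y)"
    using eventually_eG_eq_proj_grad by blast
  obtain d where "d > 0" and d: "\<And>z. norm (z - xs) < d \<Longrightarrow>
      norm (g z - g xs - H xs (z - xs)) \<le> \<epsilon> * norm (z - xs)"
    using g_derivative[OF xs_in_U] \<open>\<epsilon> > 0\<close> unfolding has_derivative_at_alt by blast
  have "norm (eG G (xs + proj T h) - eG G xs - proj T (H xs (proj T h))) \<le> \<epsilon> * norm h"
    if "norm h < min d \<delta>" for h
  proof -
    define z where "z = xs + proj T h"
    have Ph: "norm (proj T h) \<le> norm h"
      by (rule norm_proj_le[OF subspace_T])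
    have "z \<in> M"
      using mem_M_iff proj_subspace(1)[OF subspace_T] by (simp add: z_def)
    moreover have "dist z xs < \<delta>"
      using that Ph by (simp add: z_def dist_norm)
    ultimately have "eG G z - eG G xs - proj T (H xs (proj T h))
        = proj T (g z - g xs - H xs (z - xs))"
      using \<delta> xs_in_M \<open>\<delta> > 0\<close> proj_diff[OF subspace_T] by (simp add: z_def)
    also have "norm \<dots> \<le> norm (g z - g xs - H xs (z - xs))"
      by (rule norm_proj_le[OF subspace_T])
    also have "\<dots> \<le> \<epsilon> * norm (z - xs)"
      using d[of z] that Ph by (simp add: z_def)
    also have "\<dots> \<le> \<epsilon> * norm h"
      using Ph \<open>\<epsilon> > 0\<close> by (simp add: z_def)
    finally show ?thesis
      by (simp add: z_def)
  qed
  then show ?thesis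
    unfolding eventually_at dist_norm using \<open>d > 0\<close> \<open>\<delta> > 0\<close>
    by (intro exI[of _ "min d \<delta>"]) auto
qed

text \<open>The tangential gradient is monotone along M because the subdifferential is.\<close>

lemma hessian_tangent_nonneg:
  assumes "t \<in> T"
  shows "0 \<le> H xs t \<bullet> t"
proof -
  obtain \<delta> where "\<delta> > 0"
    and \<delta>: "\<And>y. y \<in> M \<Longrightarrow> dist y xs < \<delta> \<Longrightarrow> y \<in> U \<and> subdiff G y \<noteq> {} \<and> eG G y = proj T (g y)"
    using eventually_eG_eq_proj_grad by blast
  obtain v0 where "v0 \<in> subdiff G xs"
    using subdiff_xs_nonempty by blast
  have "((\<lambda>s. xs + s *\<^sub>R t) \<longlongrightarrow> xs) (nhds 0)"
    unfolding tendsto_nhds_iff by (auto intro!: tendsto_eq_intros)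
  then have "eventually (\<lambda>s. dist (xs + s *\<^sub>R t) xs < \<delta>) (nhds 0)"
    using \<open>\<delta> > 0\<close> by (rule tendstoD)
  then have "eventually (\<lambda>s. g (xs + 0 *\<^sub>R t) \<bullet> t \<le> g (xs + s *\<^sub>R t) \<bullet> t) (at_right 0)"
    unfolding eventually_at_filter
  proof (rule eventually_mono, intro impI)
    fix s :: real assume "dist (xs + s *\<^sub>R t) xs < \<delta>" "s \<in> {0<..}"
    moreover have "xs + s *\<^sub>R t \<in> M"
      using line_in_M[OF xs_in_M \<open>t \<in> T\<close>] .
    ultimately obtain w where "w \<in> subdiff G (xs + s *\<^sub>R t)" "xs + s *\<^sub>R t \<in> U"
      using \<delta> by blast
    have "0 \<le> (w - v0) \<bullet> (s *\<^sub>R t)"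
      using subdiff_monotone[OF \<open>v0 \<in> subdiff G xs\<close> \<open>w \<in> subdiff G (xs + s *\<^sub>R t)\<close>] by simp
    moreover have "w \<bullet> t = g (xs + s *\<^sub>R t) \<bullet> t" "v0 \<bullet> t = g xs \<bullet> t"
      using subdiff_minus_grad_orthogonal[OF \<open>xs + s *\<^sub>R t \<in> M\<close> \<open>xs + s *\<^sub>R t \<in> U\<close>
          \<open>w \<in> subdiff G (xs + s *\<^sub>R t)\<close> \<open>t \<in> T\<close>]
        subdiff_minus_grad_orthogonal[OF xs_in_M xs_in_U \<open>v0 \<in> subdiff G xs\<close> \<open>t \<in> T\<close>]
      by (simp_all add: inner_diff_left)
    ultimately show "g (xs + 0 *\<^sub>R t) \<bullet> t \<le> g (xs + s *\<^sub>R t) \<bullet> t"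
      using \<open>s \<in> {0<..}\<close> by (simp add: inner_diff_left zero_le_mult_iff)
  qed
  moreover have "((\<lambda>y. g y \<bullet> t) has_derivative (\<lambda>v. H xs v \<bullet> t)) (at xs)"
    using g_derivative[OF xs_in_U] by (rule has_derivative_inner_left)
  ultimately show ?thesis
    using DERIV_nonneg_if_right_nondecreasing has_real_derivative_along_line by blast
qed

end


theorem lemma4p6:
  fixes G :: "'a::euclidean_space \<Rightarrow> ereal"
    and xs :: 'a and M :: "'a set" and U :: "'a set"
    and Gt :: "'a \<Rightarrow> real" and gradGt :: "'a \<Rightarrow> 'a" and HessGt :: "'a \<Rightarrow> ('a \<Rightarrow>\<^sub>L 'a)"
  assumes "Gamma0 G"
    and "partly_smooth_affine G xs M"
    and "smooth_rep G M xs U Gt gradGt HessGt"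
  defines "T \<equiv> Tmodel G xs"
  shows "(\<forall>\<epsilon>>0. \<forall>\<^sub>F h in at 0.
           norm (eG G (xs + proj T h) - eG G xs - proj T (HessGt xs (proj T h))) \<le> \<epsilon> * norm h)
         \<and> (\<forall>h. proj T (HessGt xs (proj T h)) \<bullet> h \<ge> 0)"
proof -
  interpret partly_smooth_representative G xs M U Gt gradGt HessGt T
    using assms(2,3) T_def by unfold_locales simp_all
  have "proj T (HessGt xs (proj T h)) \<bullet> h \<ge> 0" for h
    using hessian_tangent_nonneg[OF proj_subspace(1)[OF subspace_T]] inner_proj_commute[OF subspace_T]
    by simp
  then show ?thesis
    using eG_first_order_expansion by blast
qed

end
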